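(* Let $b\ge2$ be an integer, $\gamma\in(0,1)$, and let $\phi$ be a $\mathbb{Z}$-periodic Lipschitz function satisfying condition (H). Then the family $\{m_x\}_{x\in[0,1]}$ is jointly uniformly continuous across scales: for every $\varepsilon>0$ there exists $\delta>0$ such that for every $x\in[0,1]$, every $y\in\mathbb{R}$ and every $r\in(0,1)$, $$m_x(B(y,\delta r))\le\varepsilon\, m_x(B(y,r)).$$
   Context: $\Lambda=\{0,\dots,b-1\}$, $\Sigma=\Lambda^{\mathbb{Z}_+}$, $\nu$ uniform on $\Lambda$. $S(x,\mathbf{j})=\sum_{n\ge1}\gamma^{n-1}\phi\big(\frac{x+j_1+j_2b+\cdots+j_nb^{n-1}}{b^n}\big)$ for $\mathbf{j}\in\Sigma$, $x\in[0,1]$. Condition (H): for all $\mathbf{i}\neq\mathbf{j}\in\Sigma$, $x\mapsto S(x,\mathbf{j})-S(x,\mathbf{i})$ is not identically zero on $[0,1]$. $m_x$ is the image of $\nu^{\mathbb{Z}_+}$ under $\mathbf{j}\mapsto S(x,\mathbf{j})$. *)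

theory Defs
  imports "HOL-Analysis.Analysis" "HOL-Probability.Probability"
begin

text \<open>Digit sequences \<open>j_1, j_2, \<dots>\<close> are encoded as \<open>j :: nat \<Rightarrow> nat\<close> with \<open>j_k = j (k-1)\<close>.\<close>

definition digit_space :: "nat \<Rightarrow> (nat \<Rightarrow> nat) set" where
  "digit_space b = {j. \<forall>k. j k < b}"

definition Sfun :: "nat \<Rightarrow> real \<Rightarrow> (real \<Rightarrow> real) \<Rightarrow> real \<Rightarrow> (nat \<Rightarrow> nat) \<Rightarrow> real" where
  "Sfun b \<gamma> \<phi> x j =
     (\<Sum>n. \<gamma> ^ n * \<phi> ((x + (\<Sum>k<Suc n. real (j k) * real b ^ k)) / real b ^ Suc n))"

definition digit_measure :: "nat \<Rightarrow> (nat \<Rightarrow> nat) measure" where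
  "digit_measure b = PiM UNIV (\<lambda>_. measure_pmf (pmf_of_set {0..<b}))"

definition m_meas :: "nat \<Rightarrow> real \<Rightarrow> (real \<Rightarrow> real) \<Rightarrow> real \<Rightarrow> real measure" where
  "m_meas b \<gamma> \<phi> x = distr (digit_measure b) borel (Sfun b \<gamma> \<phi> x)"

definition cond_H :: "nat \<Rightarrow> real \<Rightarrow> (real \<Rightarrow> real) \<Rightarrow> bool" where
  "cond_H b \<gamma> \<phi> \<longleftrightarrow>
     (\<forall>i\<in>digit_space b. \<forall>j\<in>digit_space b. i \<noteq> j \<longrightarrow>
        \<not> (\<forall>x\<in>{0..1}. Sfun b \<gamma> \<phi> x j - Sfun b \<gamma> \<phi> x i = 0))"

end

theory Submission
  imports Defs
begin

text \<open>
  Write \<open>G(x, y, r) = m_x(B(y, r))\<close>. Splitting off the first digit,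
  \<open>S(x, i j) = \<phi>(x_i) + \<gamma> S(x_i, j)\<close> with \<open>x_i = (x + i) / b\<close>, so \<open>G(x, y, r)\<close> is the
  average over \<open>i\<close> of \<open>G(x_i, (y - \<phi>(x_i)) / \<gamma>, r / \<gamma>)\<close>. This self-similarity reduces the
  inequality to radii \<open>r \<in> [\<gamma>, 1)\<close>. There, if \<open>B(y, \<delta> r)\<close> carries any mass, \<open>N\<close> steps of
  self-similarity (the pieces of depth \<open>N\<close> of the support have diameter at most \<open>2 C \<gamma>^N\<close>,
  where \<open>|S| \<le> C\<close>) give \<open>G(x, y, r) \<ge> b^-N\<close>; so it suffices that all balls of radius \<open>\<delta>\<close>
  have mass at most \<open>\<epsilon> b^-N\<close>, uniformly in \<open>x\<close>.

  This uniform non-atomicity is where (H) enters. If \<open>M = lim_{\<rho>\<rightarrow>0} sup_{x,y} G(x, y, \<rho>)\<close>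
  were positive, averaging shows that the children of a ball of nearly maximal mass again
  have nearly maximal mass. Iterating, the whole support of \<open>m_z\<close> lies in a tiny ball for
  all \<open>z\<close> on arbitrarily fine grids in \<open>[0, 1]\<close>; hence \<open>S(z, 111\<dots>) = S(z, 000\<dots>)\<close> there
  and, by Lipschitz continuity in \<open>z\<close>, on all of \<open>[0, 1]\<close>, contradicting (H).
\<close>

lemma (in sequence_space) emeasure_S_case_nat:
  assumes A: "A \<in> sets S"
  shows "emeasure S A = (\<integral>\<^sup>+ s. emeasure S {\<omega>. case_nat s \<omega> \<in> A} \<partial>M)"
proof -
  let ?cons = "\<lambda>(s, \<omega>). case_nat s \<omega>"
  have "emeasure S A = emeasure (M \<Otimes>\<^sub>M S) (?cons -` A \<inter> space (M \<Otimes>\<^sub>M S))"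
    by (subst PiM_iter[symmetric], rule emeasure_distr) (use A in auto)
  also have "\<dots> = (\<integral>\<^sup>+ s. emeasure S (Pair s -` (?cons -` A \<inter> space (M \<Otimes>\<^sub>M S))) \<partial>M)"
    by (rule P.emeasure_pair_measure_alt, rule measurable_sets[OF _ A]) simp
  also have "\<dots> = (\<integral>\<^sup>+ s. emeasure S {\<omega>. case_nat s \<omega> \<in> A} \<partial>M)"
    using sets.sets_into_space[OF A]
    by (intro nn_integral_cong arg_cong2[where f = emeasure] refl)
       (auto simp: space_pair_measure space_PiM PiE_iff split: nat.splits)
  finally show ?thesis .
qed

lemma space_digit_measure: "space (digit_measure b) = UNIV"
  by (simp add: digit_measure_def space_PiM)

lemma prob_space_digit_measure: "0 < b \<Longrightarrow> prob_space (digit_measure b)"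
  unfolding digit_measure_def by (intro prob_space_PiM) (simp add: prob_space_measure_pmf)

lemma measure_digit_measure_case_nat:
  assumes b: "0 < b" and A: "A \<in> sets (digit_measure b)"
  shows "measure (digit_measure b) A
           = (\<Sum>i<b. measure (digit_measure b) {j. case_nat i j \<in> A}) / b"
proof -
  interpret D: prob_space "digit_measure b" using prob_space_digit_measure[OF b] .
  have "sequence_space (measure_pmf (pmf_of_set {0..<b}))"
    by unfold_locales
  from sequence_space.emeasure_S_case_nat[OF this] A b
  have "emeasure (digit_measure b) A
          = (\<Sum>i<b. emeasure (digit_measure b) {j. case_nat i j \<in> A}) / b"
    by (simp add: digit_measure_def nn_integral_pmf_of_set atLeast0LessThan lessThan_empty_iff)
  also have "\<dots> = ennreal ((\<Sum>i<b. measure (digit_measure b) {j. case_nat i j \<in> A}) / b)"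
    using b by (simp add: D.emeasure_eq_measure sum_ennreal ennreal_of_nat_eq_real_of_nat
                          divide_ennreal sum_nonneg)
  finally show ?thesis
    by (simp add: D.emeasure_eq_measure ennreal_inj divide_nonneg_nonneg sum_nonneg)
qed

lemma periodic_add_of_int:
  assumes "\<forall>u. f (u + 1) = f u"
  shows "f (u + of_int k) = f u"
proof (induction k rule: int_induct[where k = 0])
  case (step1 k)
  then show ?case using assms by (metis add.assoc of_int_add of_int_1)
next
  case (step2 k)
  then show ?case using assms by (metis diff_add_cancel add_diff_eq of_int_diff of_int_1)
qed simp

lemma periodic_frac:
  assumes "\<forall>u. f (u + 1) = f u"
  shows "f (frac u) = f u"
  using periodic_add_of_int[OF assms, of u "- \<lfloor>u\<rfloor>"] by (simp add: frac_def)

lemma periodic_lipschitz_bounded: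
  fixes f :: "real \<Rightarrow> real"
  assumes "\<forall>u. f (u + 1) = f u" and "L-lipschitz_on UNIV f"
  shows "\<bar>f u\<bar> \<le> \<bar>f 0\<bar> + L"
proof -
  have "\<bar>f (frac u) - f 0\<bar> \<le> L * \<bar>frac u - 0\<bar>"
    using lipschitz_onD[OF assms(2), of "frac u" 0] by (simp add: dist_real_def)
  also have "\<dots> \<le> L"
    using lipschitz_on_nonneg[OF assms(2)] frac_lt_1[of u] frac_ge_0[of u]
    by (simp add: mult_left_le)
  finally have "\<bar>f (frac u) - f 0\<bar> \<le> L" .
  then show ?thesis using periodic_frac[OF assms(1), of u] by linarith
qed

lemma abs_suminf_le_geometric:
  fixes f :: "nat \<Rightarrow> real"
  assumes "0 \<le> \<gamma>" "\<gamma> < 1" and f: "\<And>n. \<bar>f n\<bar> \<le> c * \<gamma> ^ n"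
  shows "summable f" and "\<bar>suminf f\<bar> \<le> c / (1 - \<gamma>)"
proof -
  have geom: "summable (\<lambda>n. c * \<gamma> ^ n)" "(\<Sum>n. c * \<gamma> ^ n) = c / (1 - \<gamma>)"
    using assms by (simp_all add: summable_geometric suminf_geometric suminf_mult)
  show "summable f"
    using f by (intro summable_comparison_test[OF _ geom(1)]) auto
  show "\<bar>suminf f\<bar> \<le> c / (1 - \<gamma>)"
    using norm_suminf_le[of f, OF _ geom(1)] f geom(2) by simp
qed

lemma eq_0_if_abs_le_geometric:
  fixes a c d \<beta> \<gamma> :: real
  assumes "\<bar>\<gamma>\<bar> < 1" "\<bar>\<beta>\<bar> < 1" and "\<And>n. \<bar>a\<bar> \<le> c * \<gamma> ^ n + d * \<beta> ^ n"
  shows "a = 0"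
proof -
  have "(\<lambda>n. c * \<gamma> ^ n + d * \<beta> ^ n) \<longlonglongrightarrow> c * 0 + d * 0"
    using LIMSEQ_abs_realpow_zero2[OF assms(1)] LIMSEQ_abs_realpow_zero2[OF assms(2)]
    by (intro tendsto_add tendsto_mult tendsto_const)
  then have "\<bar>a\<bar> \<le> c * 0 + d * 0"
    by (rule LIMSEQ_le_const) (use assms(3) in auto)
  then show ?thesis by simp
qed

lemma grid_point_near:
  fixes z x :: real
  assumes z: "z \<in> {0..1}" and x: "x \<in> {0..1}" and n: "0 < n"
  shows "\<exists>q<n. \<bar>z - (x + real q) / real n\<bar> \<le> 1 / real n"
proof -
  obtain q where q: "q < n" "real q \<le> z * n" "z * n \<le> real q + 1"
  proof (cases "z * n < n")
    case True
    have "0 \<le> z * n" using z by simp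
    then show ?thesis
      using True by (intro that[of "nat \<lfloor>z * n\<rfloor>"]) (linarith, simp, linarith)
  next
    case False
    then show ?thesis using z n by (intro that[of "n - 1"]) (auto simp: of_nat_diff)
  qed
  have "\<bar>z * n - real q - x\<bar> \<le> 1" using q x by auto
  then have "\<bar>z - (x + real q) / real n\<bar> \<le> 1 / real n"
    using n by (simp add: field_simps abs_divide)
  with q(1) show ?thesis by blast
qed

lemma scale_induct:
  fixes \<gamma> :: real
  assumes \<gamma>: "0 < \<gamma>" "\<gamma> < 1"
    and top: "\<And>r. \<gamma> \<le> r \<Longrightarrow> r < 1 \<Longrightarrow> P r"
    and step: "\<And>r. 0 < r \<Longrightarrow> r < \<gamma> \<Longrightarrow> P (r / \<gamma>) \<Longrightarrow> P r"
    and r: "0 < r" "r < 1"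
  shows "P r"
proof -
  have "\<forall>r. \<gamma> ^ Suc n \<le> r \<longrightarrow> r < 1 \<longrightarrow> P r" for n
  proof (induction n)
    case 0
    then show ?case using top by simp
  next
    case (Suc n)
    show ?case
    proof (intro allI impI)
      fix r assume r: "\<gamma> ^ Suc (Suc n) \<le> r" "r < 1"
      show "P r"
      proof (cases "\<gamma> \<le> r")
        case False
        have "\<gamma> ^ Suc n \<le> r / \<gamma>" "r / \<gamma> < 1"
          using r False \<gamma> by (simp_all add: le_divide_eq divide_less_eq mult.commute)
        moreover have "0 < r" using r(1) \<gamma> by (meson less_le_trans zero_less_power)
        ultimately show ?thesis using Suc.IH step[of r] False by auto
      qed (use top r in auto)
    qed
  qed
  note scales = this
  obtain n where "\<gamma> ^ n < r" using real_arch_pow_inv[OF r(1) \<gamma>(2)] by blast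
  moreover have "\<gamma> ^ Suc n \<le> \<gamma> ^ n" using \<gamma> by (simp add: power_decreasing)
  ultimately have "\<gamma> ^ Suc n \<le> r" by linarith
  with scales[of n] r show ?thesis by blast
qed

lemma near_max_of_sum_near_max:
  fixes g :: "'a \<Rightarrow> real" and U t :: real
  assumes "finite I" "i \<in> I" and le: "\<And>i. i \<in> I \<Longrightarrow> g i \<le> U"
    and sum: "card I * (U - t) < (\<Sum>i\<in>I. g i)"
  shows "U - card I * t < g i"
proof -
  have "(\<Sum>i\<in>I. g i) = g i + (\<Sum>i'\<in>I - {i}. g i')"
    using assms(1,2) by (simp add: sum.remove)
  also have "(\<Sum>i'\<in>I - {i}. g i') \<le> (card I - 1) * U"
    using sum_bounded_above[of "I - {i}" g U] le assms(1,2) by (simp add: of_nat_diff)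
  finally show ?thesis using sum assms(1,2) card_gt_0_iff[of I]
    by (auto simp: of_nat_diff algebra_simps)
qed

lemma exists_inf_sup_level:
  fixes g :: "'a \<Rightarrow> real \<Rightarrow> real"
  assumes bounded: "\<And>a \<rho>. a \<in> A \<Longrightarrow> g a \<rho> \<le> c"
    and large: "\<And>\<rho>. 0 < \<rho> \<Longrightarrow> \<exists>a\<in>A. \<theta> < g a \<rho>"
  shows "\<exists>M\<ge>\<theta>. (\<forall>\<rho>>0. \<forall>s<M. \<exists>a\<in>A. s < g a \<rho>) \<and> (\<forall>s>M. \<exists>R>0. \<forall>a\<in>A. g a R \<le> s)"
proof -
  define sup_g where "sup_g \<rho> = (SUP a\<in>A. g a \<rho>)" for \<rho>
  have A: "A \<noteq> {}" using large[of 1] by auto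
  have bdd: "bdd_above ((\<lambda>a. g a \<rho>) ` A)" for \<rho>
    by (rule bdd_aboveI2[where M = c]) (rule bounded)
  have sup_ge: "\<theta> \<le> sup_g \<rho>" if "0 < \<rho>" for \<rho>
    using large[OF that] cSUP_upper[OF _ bdd] unfolding sup_g_def by (meson less_le_trans order.strict_implies_order)
  define M where "M = (INF \<rho>\<in>{0<..}. sup_g \<rho>)"
  have bdd_below: "bdd_below (sup_g ` {0<..})"
    by (rule bdd_belowI2[where m = \<theta>]) (rule sup_ge, simp)
  have "\<theta> \<le> M" unfolding M_def by (rule cINF_greatest) (auto intro: sup_ge)
  moreover have "\<exists>a\<in>A. s < g a \<rho>" if "0 < \<rho>" "s < M" for \<rho> s
  proof -
    have "s < sup_g \<rho>" using cINF_lower[OF bdd_below, of \<rho>] that unfolding M_def by auto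
    then show ?thesis unfolding sup_g_def using less_cSUP_iff[OF A bdd] by blast
  qed
  moreover have "\<exists>R>0. \<forall>a\<in>A. g a R \<le> s" if "M < s" for s
  proof -
    have "(INF \<rho>\<in>{0<..}. sup_g \<rho>) < s" using that by (simp add: M_def)
    then obtain R where "0 < R" "sup_g R < s"
      by (subst (asm) cINF_less_iff[OF _ bdd_below]) auto
    then show ?thesis using cSUP_upper[OF _ bdd] unfolding sup_g_def by (meson order.trans less_le)
  qed
  ultimately show ?thesis by blast
qed

locale weierstrass_setting =
  fixes b :: nat and \<gamma> :: real and \<phi> :: "real \<Rightarrow> real" and L :: real
  assumes b_ge_2: "2 \<le> b" and gamma_pos: "0 < \<gamma>" and gamma_lt_1: "\<gamma> < 1"
    and phi_periodic: "\<forall>u. \<phi> (u + 1) = \<phi> u"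
    and phi_lipschitz: "L-lipschitz_on UNIV \<phi>"
begin

abbreviation "P \<equiv> digit_measure b"
abbreviation "S \<equiv> Sfun b \<gamma> \<phi>"

definition "B = \<bar>\<phi> 0\<bar> + L"
definition "C = B / (1 - \<gamma>)"

definition "S_term x j n = \<gamma> ^ n * \<phi> ((x + (\<Sum>k<Suc n. real (j k) * real b ^ k)) / real b ^ Suc n)"

definition "child x i = (x + real i) / real b"
definition "child_centre x y i = (y - \<phi> (child x i)) / \<gamma>"

definition "ball_mass x y r = measure P {j. \<bar>S x j - y\<bar> < r}"

lemma b_pos: "0 < b"
  using b_ge_2 by simp

lemma L_nonneg: "0 \<le> L"
  using phi_lipschitz by (rule lipschitz_on_nonneg)

interpretation P: prob_space P
  using prob_space_digit_measure[OF b_pos] .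

lemma abs_phi_le_B: "\<bar>\<phi> u\<bar> \<le> B"
  unfolding B_def by (rule periodic_lipschitz_bounded[OF phi_periodic phi_lipschitz])

lemma C_nonneg: "0 \<le> C"
  using abs_phi_le_B[of 0] gamma_lt_1 by (simp add: C_def)

lemma S_eq_suminf: "S x j = suminf (S_term x j)"
  unfolding Sfun_def S_term_def ..

lemma abs_S_term_le: "\<bar>S_term x j n\<bar> \<le> B * \<gamma> ^ n"
  using abs_phi_le_B gamma_pos by (simp add: S_term_def abs_mult mult.commute mult_left_mono)

lemma summable_S_term: "summable (S_term x j)"
  using abs_suminf_le_geometric(1)[OF _ gamma_lt_1 abs_S_term_le] gamma_pos by simp

lemma abs_S_le_C: "\<bar>S x j\<bar> \<le> C"
  using abs_suminf_le_geometric(2)[OF _ gamma_lt_1 abs_S_term_le] gamma_pos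
  by (simp add: S_eq_suminf C_def)

lemma S_case_nat: "S x (case_nat i j) = \<phi> (child x i) + \<gamma> * S (child x i) j"
proof -
  have "S_term x (case_nat i j) (Suc n) = \<gamma> * S_term (child x i) j n" for n
  proof -
    have "(\<Sum>k<Suc (Suc n). real (case_nat i j k) * real b ^ k)
            = real i + real b * (\<Sum>k<Suc n. real (j k) * real b ^ k)"
      by (subst sum.lessThan_Suc_shift) (simp add: sum_distrib_left algebra_simps)
    then show ?thesis
      using b_pos by (simp add: S_term_def child_def field_simps)
  qed
  moreover have "S_term x (case_nat i j) 0 = \<phi> (child x i)"
    by (simp add: S_term_def child_def)
  ultimately show ?thesis
    using suminf_split_head[OF summable_S_term, of x "case_nat i j"]
    by (simp add: S_eq_suminf suminf_mult summable_S_term)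
qed

lemma abs_S_case_nat_sub:
  "\<bar>S x (case_nat i j) - y\<bar> = \<gamma> * \<bar>S (child x i) j - child_centre x y i\<bar>"
  using gamma_pos by (simp add: S_case_nat child_centre_def abs_mult[symmetric] field_simps)

lemma S_lipschitz: "\<bar>S x j - S x' j\<bar> \<le> L / (1 - \<gamma>) * \<bar>x - x'\<bar>"
proof -
  have "\<bar>S_term x j n - S_term x' j n\<bar> \<le> (L * \<bar>x - x'\<bar>) * \<gamma> ^ n" for n
  proof -
    let ?u = "\<lambda>x. (x + (\<Sum>k<Suc n. real (j k) * real b ^ k)) / real b ^ Suc n"
    have "\<bar>?u x - ?u x'\<bar> = \<bar>x - x'\<bar> / real b ^ Suc n"
      by (simp add: diff_divide_distrib[symmetric] abs_divide)
    also have "\<dots> \<le> \<bar>x - x'\<bar>"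
    proof -
      have "1 \<le> real b ^ Suc n" using b_pos by (intro one_le_power) simp
      then show ?thesis by (simp add: divide_le_eq mult_le_cancel_left1)
    qed
    finally have "\<bar>\<phi> (?u x) - \<phi> (?u x')\<bar> \<le> L * \<bar>x - x'\<bar>"
      using lipschitz_onD[OF phi_lipschitz, of "?u x" "?u x'"] L_nonneg
      by (simp add: dist_real_def) (meson mult_left_mono order_trans)
    then show ?thesis
      using gamma_pos
      by (simp add: S_term_def right_diff_distrib[symmetric] abs_mult mult.commute mult_left_mono)
  qed
  from abs_suminf_le_geometric(2)[OF _ gamma_lt_1 this] gamma_pos
  show ?thesis
    by (simp add: S_eq_suminf suminf_diff[OF summable_S_term summable_S_term])
qed

lemma S_measurable [measurable]: "S x \<in> borel_measurable P"
proof -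
  have "\<phi> \<in> borel_measurable borel"
    using lipschitz_on_continuous_on[OF phi_lipschitz] by (rule borel_measurable_continuous_onI)
  then show ?thesis
    unfolding Sfun_def digit_measure_def by measurable
qed

lemma child_in_unit_interval: "x \<in> {0..1} \<Longrightarrow> i < b \<Longrightarrow> child x i \<in> {0..1}"
  using b_pos by (auto simp: child_def divide_le_eq)

lemma sets_ball_preimage [measurable]: "{j. \<bar>S x j - y\<bar> < r} \<in> sets P"
proof -
  have "{j \<in> space P. \<bar>S x j - y\<bar> < r} \<in> sets P" by measurable
  then show ?thesis by (simp add: space_digit_measure)
qed

lemma ball_mass_nonneg: "0 \<le> ball_mass x y r"
  by (simp add: ball_mass_def)

lemma ball_mass_le_1: "ball_mass x y r \<le> 1"
  unfolding ball_mass_def by (rule P.prob_le_1)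

lemma ball_mass_mono: "r \<le> r' \<Longrightarrow> ball_mass x y r \<le> ball_mass x y r'"
  unfolding ball_mass_def by (rule P.finite_measure_mono) auto

lemma ball_mass_pos_imp_point: "0 < ball_mass x y r \<Longrightarrow> \<exists>j. \<bar>S x j - y\<bar> < r"
  unfolding ball_mass_def by (cases "{j. \<bar>S x j - y\<bar> < r} = {}") auto

lemma ball_mass_eq_1: "(\<And>j. \<bar>S x j - y\<bar> < r) \<Longrightarrow> ball_mass x y r = 1"
  using P.prob_space by (simp add: ball_mass_def space_digit_measure)

lemma ball_mass_self_similar:
  "ball_mass x y r = (\<Sum>i<b. ball_mass (child x i) (child_centre x y i) (r / \<gamma>)) / b"
proof -
  have "{j. case_nat i j \<in> {j. \<bar>S x j - y\<bar> < r}}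
          = {j. \<bar>S (child x i) j - child_centre x y i\<bar> < r / \<gamma>}" for i
    using gamma_pos by (auto simp: abs_S_case_nat_sub pos_less_divide_eq mult.commute)
  then show ?thesis
    unfolding ball_mass_def by (simp add: measure_digit_measure_case_nat[OF b_pos])
qed

lemma ball_mass_lower_bound:
  "0 < ball_mass x y \<rho> \<Longrightarrow> 1 / real b ^ N \<le> ball_mass x y (\<rho> + 2 * C * \<gamma> ^ N)"
proof (induction N arbitrary: x y \<rho>)
  case 0
  then obtain j where j: "\<bar>S x j - y\<bar> < \<rho>"
    using ball_mass_pos_imp_point by blast
  have "\<bar>S x j' - y\<bar> < \<rho> + 2 * C" for j'
    using j abs_S_le_C[of x j] abs_S_le_C[of x j'] by linarith
  then show ?case using ball_mass_eq_1 by simp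
next
  case (Suc N)
  let ?child_mass = "\<lambda>r i. ball_mass (child x i) (child_centre x y i) r"
  have "0 < (\<Sum>i<b. ?child_mass (\<rho> / \<gamma>) i)"
    using Suc.prems ball_mass_self_similar[of x y \<rho>] by (simp add: zero_less_divide_iff)
  then obtain i where i: "i < b" "0 < ?child_mass (\<rho> / \<gamma>) i"
    using sum.not_neutral_contains_not_neutral[of "?child_mass (\<rho> / \<gamma>)" "{..<b}"]
    by (metis ball_mass_nonneg lessThan_iff less_eq_real_def less_irrefl)
  have radius: "(\<rho> + 2 * C * \<gamma> ^ Suc N) / \<gamma> = \<rho> / \<gamma> + 2 * C * \<gamma> ^ N"
    using gamma_pos by (simp add: field_simps)
  have "1 / real b ^ N \<le> ?child_mass ((\<rho> + 2 * C * \<gamma> ^ Suc N) / \<gamma>) i"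
    unfolding radius by (rule Suc.IH[OF i(2)])
  also have "\<dots> \<le> (\<Sum>i<b. ?child_mass ((\<rho> + 2 * C * \<gamma> ^ Suc N) / \<gamma>) i)"
    using i(1) by (intro member_le_sum) (auto simp: ball_mass_nonneg)
  finally have "1 / real b ^ N / b \<le> (\<Sum>i<b. ?child_mass ((\<rho> + 2 * C * \<gamma> ^ Suc N) / \<gamma>) i) / b"
    by (rule divide_right_mono) simp
  then show ?case
    using ball_mass_self_similar[of x y "\<rho> + 2 * C * \<gamma> ^ Suc N"] by (simp add: mult.commute)
qed

lemma divide_gamma_le_divide_gamma_power: "0 \<le> \<rho> \<Longrightarrow> \<rho> / \<gamma> \<le> \<rho> / \<gamma> ^ Suc k"
  using gamma_pos gamma_lt_1 by (intro divide_left_mono) (auto simp: power_le_one)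

lemma near_max_child:
  fixes U t :: real
  assumes bound: "\<forall>x'\<in>{0..1}. \<forall>y'. ball_mass x' y' R \<le> U"
    and x: "x \<in> {0..1}" and \<rho>: "\<rho> / \<gamma> \<le> R" and near_max: "U - t < ball_mass x y \<rho>"
    and i: "i < b"
  shows "U - b * t < ball_mass (child x i) (child_centre x y i) (\<rho> / \<gamma>)"
proof -
  have "U - real (card {..<b}) * t < ball_mass (child x i) (child_centre x y i) (\<rho> / \<gamma>)"
  proof (rule near_max_of_sum_near_max)
    show "ball_mass (child x i') (child_centre x y i') (\<rho> / \<gamma>) \<le> U" if "i' \<in> {..<b}" for i'
      using bound child_in_unit_interval[OF x] that ball_mass_mono[OF \<rho>] by (meson lessThan_iff order_trans)
    show "real (card {..<b}) * (U - t) < (\<Sum>i\<in>{..<b}. ball_mass (child x i) (child_centre x y i) (\<rho> / \<gamma>))"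
      using near_max ball_mass_self_similar[of x y \<rho>] b_pos by (simp add: field_simps)
  qed (use i in auto)
  then show ?thesis by simp
qed

lemma near_max_ball_near_all_points:
  fixes U t :: real
  assumes bound: "\<forall>x'\<in>{0..1}. \<forall>y'. ball_mass x' y' R \<le> U"
  shows "x \<in> {0..1} \<Longrightarrow> 0 < \<rho> \<Longrightarrow> \<rho> / \<gamma> ^ k \<le> R \<Longrightarrow> U - t < ball_mass x y \<rho>
    \<Longrightarrow> b ^ k * t \<le> U \<Longrightarrow> j \<in> digit_space b \<Longrightarrow> \<bar>S x j - y\<bar> \<le> \<rho> + 2 * C * \<gamma> ^ k"
proof (induction k arbitrary: x y \<rho> t j)
  case 0
  then obtain j' where "\<bar>S x j' - y\<bar> < \<rho>"
    using ball_mass_pos_imp_point by fastforce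
  then show ?case using abs_S_le_C[of x j] abs_S_le_C[of x j'] by simp
next
  case (Suc k)
  define i where "i = j 0"
  define j' where "j' = (\<lambda>n. j (Suc n))"
  have j: "j = case_nat i j'"
    by (auto simp: i_def j'_def split: nat.split)
  have i: "i < b" and j': "j' \<in> digit_space b"
    using Suc.prems(6) by (auto simp: i_def j'_def digit_space_def)
  from Suc.prems(2) have "\<rho> / \<gamma> \<le> \<rho> / \<gamma> ^ Suc k"
    by (intro divide_gamma_le_divide_gamma_power) simp
  with Suc.prems have child_near_max: "U - b * t < ball_mass (child x i) (child_centre x y i) (\<rho> / \<gamma>)"
    by (intro near_max_child[OF bound _ _ _ i]) auto
  have "\<bar>S (child x i) j' - child_centre x y i\<bar> \<le> \<rho> / \<gamma> + 2 * C * \<gamma> ^ k"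
    using Suc.prems gamma_pos
    by (intro Suc.IH[OF child_in_unit_interval[OF _ i] _ _ child_near_max _ j'])
       (auto simp: field_simps)
  moreover have "\<bar>S x j - y\<bar> = \<gamma> * \<bar>S (child x i) j' - child_centre x y i\<bar>"
    unfolding j by (rule abs_S_case_nat_sub)
  ultimately have "\<bar>S x j - y\<bar> \<le> \<gamma> * (\<rho> / \<gamma> + 2 * C * \<gamma> ^ k)"
    using gamma_pos by simp
  also have "\<dots> = \<rho> + 2 * C * \<gamma> ^ Suc k"
    using gamma_pos by (simp add: field_simps)
  finally show ?case .
qed

lemma near_max_descendant:
  fixes U t :: real
  assumes bound: "\<forall>x'\<in>{0..1}. \<forall>y'. ball_mass x' y' R \<le> U"
  shows "x \<in> {0..1} \<Longrightarrow> 0 < \<rho> \<Longrightarrow> \<rho> / \<gamma> ^ m \<le> R \<Longrightarrow> U - t < ball_mass x y \<rho> \<Longrightarrow> q < b ^ m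
    \<Longrightarrow> \<exists>y'. U - b ^ m * t < ball_mass ((x + real q) / real b ^ m) y' (\<rho> / \<gamma> ^ m)"
proof (induction m arbitrary: x y \<rho> t q)
  case 0
  then show ?case by auto
next
  case (Suc m)
  define i where "i = q mod b"
  define q' where "q' = q div b"
  have i: "i < b" using b_pos by (simp add: i_def)
  have q': "q' < b ^ m"
    using Suc.prems(5) by (simp add: q'_def less_mult_imp_div_less mult.commute)
  have child_grid: "(child x i + real q') / real b ^ m = (x + real q) / real b ^ Suc m"
  proof -
    have "real q = real i + real b * real q'"
      by (simp add: i_def q'_def flip: of_nat_mult of_nat_add)
    then show ?thesis using b_pos by (simp add: child_def field_simps)
  qed
  from Suc.prems(2) have "\<rho> / \<gamma> \<le> \<rho> / \<gamma> ^ Suc m"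
    by (intro divide_gamma_le_divide_gamma_power) simp
  with Suc.prems have "U - b * t < ball_mass (child x i) (child_centre x y i) (\<rho> / \<gamma>)"
    by (intro near_max_child[OF bound _ _ _ i]) auto
  from Suc.IH[OF child_in_unit_interval[OF Suc.prems(1) i] _ _ this q'] Suc.prems(2,3) gamma_pos
  show ?case
    unfolding child_grid by (simp add: field_simps)
qed

definition "limiting_max_mass M \<longleftrightarrow>
  (\<forall>\<rho>>0. \<forall>s<M. \<exists>x\<in>{0..1}. \<exists>y. s < ball_mass x y \<rho>) \<and>
  (\<forall>s>M. \<exists>R>0. \<forall>x\<in>{0..1}. \<forall>y. ball_mass x y R \<le> s)"

lemma small_oscillation_on_grid:
  assumes M: "limiting_max_mass M" "0 < M"
  shows "\<exists>x\<in>{0..1}. \<forall>q<b ^ n. \<forall>j\<in>digit_space b. \<forall>j'\<in>digit_space b.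
           \<bar>S ((x + real q) / real b ^ n) j - S ((x + real q) / real b ^ n) j'\<bar> \<le> 2 * (1 + 2 * C) * \<gamma> ^ n"
proof -
  have below: "\<forall>\<rho>>0. \<forall>s<M. \<exists>x\<in>{0..1}. \<exists>y. s < ball_mass x y \<rho>"
    and above: "\<forall>s>M. \<exists>R>0. \<forall>x\<in>{0..1}. \<forall>y. ball_mass x y R \<le> s"
    using M(1) by (simp_all add: limiting_max_mass_def)
  \<comment> \<open>\<open>t\<close> is small enough for a nearly maximal ball to stay nearly maximal for \<open>2 n\<close>
    generations: \<open>n\<close> to reach a grid point, \<open>n\<close> more to pin down its whole support.\<close>
  define t where "t = M / b ^ (2 * n)"
  define U where "U = M + t / 2"
  have t: "0 < t" using M(2) b_pos by (simp add: t_def)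
  have "M < U" using t by (simp add: U_def)
  then obtain R0 where R0: "0 < R0" "\<forall>x\<in>{0..1}. \<forall>y. ball_mass x y R0 \<le> U"
    using above by blast
  define R where "R = min R0 1"
  have R: "0 < R" "R \<le> 1" "R \<le> R0" using R0 by (auto simp: R_def)
  have bound: "\<forall>x\<in>{0..1}. \<forall>y. ball_mass x y R \<le> U"
    using R0(2) ball_mass_mono[OF R(3)] by (meson order_trans)
  have "0 < R * \<gamma> ^ (2 * n)" "U - t < M"
    using R gamma_pos t by (simp_all add: U_def)
  then obtain x y where x: "x \<in> {0..1}" and near_max: "U - t < ball_mass x y (R * \<gamma> ^ (2 * n))"
    using below by blast
  have "\<bar>S ((x + real q) / real b ^ n) j - S ((x + real q) / real b ^ n) j'\<bar> \<le> 2 * (1 + 2 * C) * \<gamma> ^ n"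
    if q: "q < b ^ n" and j: "j \<in> digit_space b" and j': "j' \<in> digit_space b" for q j j'
  proof -
    let ?z = "(x + real q) / real b ^ n"
    have "\<exists>y'. U - b ^ n * t < ball_mass ?z y' (R * \<gamma> ^ (2 * n) / \<gamma> ^ n)"
      using R gamma_pos gamma_lt_1 
      by (intro near_max_descendant[OF bound x _ _ near_max q])
         (auto simp: power_mult_distrib mult_2 power_add mult_le_one power_le_one)
    then obtain y' where y': "U - b ^ n * t < ball_mass ?z y' (R * \<gamma> ^ n)"
      using gamma_pos by (auto simp: mult_2 power_add)
    have "real q + 1 \<le> real b ^ n"
      using q by (metis Suc_leI of_nat_Suc of_nat_le_iff of_nat_power add.commute)
    then have z: "?z \<in> {0..1}"
      using x by (auto simp: divide_le_eq)
    have "b ^ n * (b ^ n * t) \<le> U"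
      using t b_pos by (simp add: t_def U_def mult_2 power_add)
    then have "\<bar>S ?z j'' - y'\<bar> \<le> R * \<gamma> ^ n + 2 * C * \<gamma> ^ n" if "j'' \<in> digit_space b" for j''
      using R gamma_pos
      by (intro near_max_ball_near_all_points[OF bound z _ _ y' _ that]) auto
    from this[OF j] this[OF j']
    have "\<bar>S ?z j - S ?z j'\<bar> \<le> 2 * (R + 2 * C) * \<gamma> ^ n"
      by (simp add: algebra_simps)
    also have "\<dots> \<le> 2 * (1 + 2 * C) * \<gamma> ^ n"
      using R gamma_pos by (intro mult_right_mono) auto
    finally show ?thesis .
  qed
  with x show ?thesis by blast
qed

lemma S_ones_eq_S_zeros:
  assumes M: "limiting_max_mass M" "0 < M"
    and z: "z \<in> {0..1}"
  shows "S z (\<lambda>_. 1) = S z (\<lambda>_. 0)"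
proof -
  let ?D = "\<lambda>z. S z (\<lambda>_. 1) - S z (\<lambda>_. 0)"
  have "?D z = 0"
  proof (rule eq_0_if_abs_le_geometric)
    show "\<bar>\<gamma>\<bar> < 1" "\<bar>1 / real b\<bar> < 1"
      using gamma_pos gamma_lt_1 b_ge_2 by auto
    fix n
    obtain x where x: "x \<in> {0..1}" and osc: "\<forall>q<b ^ n. \<forall>j\<in>digit_space b. \<forall>j'\<in>digit_space b.
        \<bar>S ((x + real q) / real b ^ n) j - S ((x + real q) / real b ^ n) j'\<bar> \<le> 2 * (1 + 2 * C) * \<gamma> ^ n"
      using small_oscillation_on_grid[OF M] by blast
    obtain q where q: "q < b ^ n" and near: "\<bar>z - (x + real q) / real b ^ n\<bar> \<le> 1 / real b ^ n"
      using grid_point_near[OF z x, of "b ^ n"] b_pos by auto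
    let ?z = "(x + real q) / real b ^ n"
    have "\<bar>?D ?z\<bar> \<le> 2 * (1 + 2 * C) * \<gamma> ^ n"
      using osc q b_ge_2 by (auto simp: digit_space_def)
    moreover have "\<bar>?D z - ?D ?z\<bar> \<le> 2 * (L / (1 - \<gamma>)) * \<bar>z - ?z\<bar>"
      using S_lipschitz[of z "\<lambda>_. 1" ?z] S_lipschitz[of z "\<lambda>_. 0" ?z] by linarith
    moreover have "2 * (L / (1 - \<gamma>)) * \<bar>z - ?z\<bar> \<le> 2 * (L / (1 - \<gamma>)) * (1 / b) ^ n"
      using near L_nonneg gamma_lt_1 by (intro mult_left_mono) (auto simp: power_one_over)
    ultimately show "\<bar>?D z\<bar> \<le> 2 * (1 + 2 * C) * \<gamma> ^ n + 2 * (L / (1 - \<gamma>)) * (1 / b) ^ n"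
      by linarith
  qed
  then show ?thesis by simp
qed

lemma ball_mass_uniformly_small:
  assumes H: "cond_H b \<gamma> \<phi>" and \<theta>: "0 < \<theta>"
  shows "\<exists>\<rho>>0. \<forall>x\<in>{0..1}. \<forall>y. ball_mass x y \<rho> \<le> \<theta>"
proof (rule ccontr)
  assume "\<not> ?thesis"
  then have "\<exists>a\<in>{0..1} \<times> UNIV. \<theta> < ball_mass (fst a) (snd a) \<rho>" if "0 < \<rho>" for \<rho>
    using that by (auto simp: not_le)
  from exists_inf_sup_level[of "{0..1} \<times> UNIV" "\<lambda>a. ball_mass (fst a) (snd a)", OF ball_mass_le_1 this]
  obtain M where "limiting_max_mass M" "\<theta> \<le> M"
    by (auto simp: limiting_max_mass_def)
  with \<theta> have "\<forall>z\<in>{0..1}. S z (\<lambda>_. 1) - S z (\<lambda>_. 0) = 0"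
    using S_ones_eq_S_zeros by simp
  moreover have "(\<lambda>_. 1) \<in> digit_space b" "(\<lambda>_. 0) \<in> digit_space b" "(\<lambda>_::nat. 0::nat) \<noteq> (\<lambda>_. 1)"
    using b_ge_2 by (auto simp: digit_space_def fun_eq_iff)
  ultimately show False
    using H unfolding cond_H_def by blast
qed

lemma ball_mass_ratio_top_scale:
  assumes N: "2 * C * \<gamma> ^ N \<le> \<gamma> / 2" and \<delta>: "0 < \<delta>" "\<delta> \<le> 1 / 2"
    and small: "\<forall>x\<in>{0..1}. \<forall>y. ball_mass x y \<delta> \<le> \<epsilon> / real b ^ N" and \<epsilon>: "0 \<le> \<epsilon>"
    and x: "x \<in> {0..1}" and r: "\<gamma> \<le> r" "r < 1"
  shows "ball_mass x y (\<delta> * r) \<le> \<epsilon> * ball_mass x y r"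
proof (cases "ball_mass x y (\<delta> * r) = 0")
  case True
  then show ?thesis using ball_mass_nonneg \<epsilon> by simp
next
  case False
  then have "0 < ball_mass x y (\<delta> * r)"
    using ball_mass_nonneg by (simp add: order_less_le)
  then have "1 / real b ^ N \<le> ball_mass x y (\<delta> * r + 2 * C * \<gamma> ^ N)"
    by (rule ball_mass_lower_bound)
  also have "\<dots> \<le> ball_mass x y r"
  proof (rule ball_mass_mono)
    have "\<delta> * r \<le> 1 / 2 * r"
      using \<delta> r gamma_pos by (intro mult_right_mono) auto
    then show "\<delta> * r + 2 * C * \<gamma> ^ N \<le> r" using N r by linarith
  qed
  finally have lower: "1 / real b ^ N \<le> ball_mass x y r" .
  have "ball_mass x y (\<delta> * r) \<le> ball_mass x y \<delta>"
    using \<delta> r gamma_pos by (intro ball_mass_mono) simp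
  also have "\<dots> \<le> \<epsilon> * (1 / real b ^ N)"
    using small x by simp
  also have "\<dots> \<le> \<epsilon> * ball_mass x y r"
    using lower \<epsilon> by (rule mult_left_mono)
  finally show ?thesis .
qed

lemma ball_mass_ratio_descends:
  assumes ratio: "\<forall>x\<in>{0..1}. \<forall>y. ball_mass x y (\<delta> * (r / \<gamma>)) \<le> \<epsilon> * ball_mass x y (r / \<gamma>)"
    and x: "x \<in> {0..1}"
  shows "ball_mass x y (\<delta> * r) \<le> \<epsilon> * ball_mass x y r"
proof -
  have "ball_mass x y (\<delta> * r) = (\<Sum>i<b. ball_mass (child x i) (child_centre x y i) (\<delta> * (r / \<gamma>))) / b"
    using ball_mass_self_similar[of x y "\<delta> * r"] by simp
  also have "\<dots> \<le> (\<Sum>i<b. \<epsilon> * ball_mass (child x i) (child_centre x y i) (r / \<gamma>)) / b"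
    using ratio child_in_unit_interval[OF x] by (intro divide_right_mono sum_mono) auto
  also have "\<dots> = \<epsilon> * ball_mass x y r"
    using ball_mass_self_similar[of x y r] by (simp add: sum_distrib_left)
  finally show ?thesis .
qed

lemma ball_mass_ratio_uniform:
  assumes H: "cond_H b \<gamma> \<phi>" and \<epsilon>: "0 < \<epsilon>"
  shows "\<exists>\<delta>>0. \<forall>x\<in>{0..1}. \<forall>y. \<forall>r\<in>{0<..<1}. ball_mass x y (\<delta> * r) \<le> \<epsilon> * ball_mass x y r"
proof -
  obtain N where "\<gamma> ^ N < \<gamma> / (4 * C + 2)"
    using real_arch_pow_inv[of "\<gamma> / (4 * C + 2)" \<gamma>] gamma_pos gamma_lt_1 C_nonneg by auto
  moreover have "0 \<le> \<gamma> ^ N" using gamma_pos by simp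
  ultimately have N: "2 * C * \<gamma> ^ N \<le> \<gamma> / 2"
    using C_nonneg by (simp add: less_divide_eq algebra_simps)
  obtain \<rho> where \<rho>: "0 < \<rho>" "\<forall>x\<in>{0..1}. \<forall>y. ball_mass x y \<rho> \<le> \<epsilon> / real b ^ N"
    using ball_mass_uniformly_small[OF H, of "\<epsilon> / real b ^ N"] \<epsilon> b_pos by auto
  define \<delta> where "\<delta> = min \<rho> (1 / 2)"
  have \<delta>: "0 < \<delta>" "\<delta> \<le> 1 / 2" "\<delta> \<le> \<rho>"
    using \<rho> by (auto simp: \<delta>_def)
  have small: "\<forall>x\<in>{0..1}. \<forall>y. ball_mass x y \<delta> \<le> \<epsilon> / real b ^ N"
    using \<rho>(2) ball_mass_mono[OF \<delta>(3)] order_trans by blast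
  let ?ratio = "\<lambda>r. \<forall>x\<in>{0..1}. \<forall>y. ball_mass x y (\<delta> * r) \<le> \<epsilon> * ball_mass x y r"
  have top: "?ratio r" if "\<gamma> \<le> r" "r < 1" for r
    using ball_mass_ratio_top_scale[OF N \<delta>(1,2) small] \<epsilon> that by simp
  have step: "?ratio r" if "?ratio (r / \<gamma>)" for r
    using ball_mass_ratio_descends[OF that] by blast
  have "?ratio r" if "0 < r" "r < 1" for r
    by (rule scale_induct[of \<gamma> ?ratio, OF gamma_pos gamma_lt_1 top step that])
  with \<delta>(1) show ?thesis by auto
qed

lemma measure_m_meas_ball: "measure (m_meas b \<gamma> \<phi> x) (ball y r) = ball_mass x y r"
proof -
  have "measure (m_meas b \<gamma> \<phi> x) (ball y r) = measure P (S x -` ball y r \<inter> space P)"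
    unfolding m_meas_def by (rule measure_distr) auto
  also have "S x -` ball y r \<inter> space P = {j. \<bar>S x j - y\<bar> < r}"
    by (auto simp: space_digit_measure dist_real_def abs_minus_commute)
  finally show ?thesis unfolding ball_mass_def .
qed

end

theorem proposition5p4:
  fixes b :: nat and \<gamma> :: real and \<phi> :: "real \<Rightarrow> real"
  assumes "b \<ge> 2"
    and "0 < \<gamma>" and "\<gamma> < 1"
    and "\<forall>u. \<phi> (u + 1) = \<phi> u"
    and "\<exists>L. L-lipschitz_on UNIV \<phi>"
    and "cond_H b \<gamma> \<phi>"
  shows "\<forall>\<epsilon>>0. \<exists>\<delta>>0. \<forall>x\<in>{0..1}. \<forall>y::real. \<forall>r\<in>{0<..<1}.
           measure (m_meas b \<gamma> \<phi> x) (ball y (\<delta> * r))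
             \<le> \<epsilon> * measure (m_meas b \<gamma> \<phi> x) (ball y r)"
proof -
  obtain L where "L-lipschitz_on UNIV \<phi>"
    using assms(5) by blast
  with assms(1-4) interpret weierstrass_setting b \<gamma> \<phi> L
    by unfold_locales
  show ?thesis
    unfolding measure_m_meas_ball using ball_mass_ratio_uniform[OF assms(6)] by blast
qed

end
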